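(* For every $k\ge1$ and every word $\gamma_1\gamma_2\cdots\gamma_k\in\{A,B,C\}^k$ there is a continuous function $f_{\gamma_1\cdots\gamma_k}:T\to[0,1]$, independent of $Q$ and $\alpha$, such that for every integer $Q\ge2$ and every irrational $\alpha\in(0,1)$, with $q_1,q_2$ the denominators of the consecutive Farey fractions $a_1/q_1<\alpha<a_2/q_2$ of order $Q-1$, \[ \frac{\#\{\Gamma\in G_{Q,k}(\alpha):\ \Gamma=\gamma_1\gamma_2\cdots\gamma_k\}}{Q}=f_{\gamma_1\cdots\gamma_k}\!\left(\frac{q_1}{Q},\frac{q_2}{Q}\right). \] For $k=1$ one has $f_A(x,y)=1-x$, $f_B(x,y)=1-y$, $f_C(x,y)=x+y-1$.
   Context: $T=\{(x,y): x\le1,\ y\le1,\ x+y\ge1\}$. For irrational $\alpha$, $S_Q(\alpha)$ is the set $\{n\alpha\}$, $0\le n<Q$, on the circle $[0,1]$ with $0\sim1$; its $Q$ gaps have one of three lengths $A=q_1\alpha-a_1$, $B=a_2-q_2\alpha$, $C=A+B$, where $a_1/q_1<\alpha<a_2/q_2$ are consecutive Farey fractions in $[0,1]$ with denominators $<Q$; each gap is labelled by the letter $A$, $B$ or $C$ according to its length. $G_{Q,k}(\alpha)$ is the list (with multiplicity) of the $Q$ words $\gamma_1\cdots\gamma_k$ of labels of $k$ consecutive gaps of $S_Q(\alpha)$, starting at each of the $Q$ gaps in turn and wrapping around $0$. For example $G_{10,2}(\sqrt2)=\{AC,CA,AB,BA,AC,CA,AB,BA,AB,BA\}$. *)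

theory Defs
  imports "HOL-Analysis.Analysis"
begin

datatype letter = LA | LB | LC

definition Tri :: "(real \<times> real) set" where
  "Tri = {(x, y). x \<le> 1 \<and> y \<le> 1 \<and> x + y \<ge> 1}"

definition farey_nbrs :: "nat \<Rightarrow> real \<Rightarrow> nat \<Rightarrow> nat \<Rightarrow> nat \<Rightarrow> nat \<Rightarrow> bool" where
  "farey_nbrs N \<alpha> a1 q1 a2 q2 \<longleftrightarrow>
     1 \<le> q1 \<and> q1 \<le> N \<and> 1 \<le> q2 \<and> q2 \<le> N \<and>
     a1 \<le> q1 \<and> a2 \<le> q2 \<and> coprime a1 q1 \<and> coprime a2 q2 \<and>
     real a1 / real q1 < \<alpha> \<and> \<alpha> < real a2 / real q2 \<and>
     (\<forall>a q. 1 \<le> q \<and> q \<le> N \<and> a \<le> q \<longrightarrow>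
        \<not> (real a1 / real q1 < real a / real q \<and> real a / real q < real a2 / real q2))"

definition sorted_pts :: "nat \<Rightarrow> real \<Rightarrow> real list" where
  "sorted_pts Q \<alpha> = sort (map (\<lambda>n. frac (real n * \<alpha>)) [0..<Q])"

definition gap_len :: "nat \<Rightarrow> real \<Rightarrow> nat \<Rightarrow> real" where
  "gap_len Q \<alpha> i =
     (let s = sorted_pts Q \<alpha> in
      if Suc i < Q then s ! Suc i - s ! i else 1 - s ! i + s ! 0)"

fun letter_len :: "real \<Rightarrow> nat \<Rightarrow> nat \<Rightarrow> nat \<Rightarrow> nat \<Rightarrow> letter \<Rightarrow> real" where
  "letter_len \<alpha> a1 q1 a2 q2 LA = real q1 * \<alpha> - real a1"
| "letter_len \<alpha> a1 q1 a2 q2 LB = real a2 - real q2 * \<alpha>"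
| "letter_len \<alpha> a1 q1 a2 q2 LC = (real q1 * \<alpha> - real a1) + (real a2 - real q2 * \<alpha>)"

text \<open>Number of elements of G_{Q,k}(alpha) equal to the word w (k = length w): the number
  of starting gaps i < Q such that the k consecutive gaps i, i+1, ... (cyclically) carry
  the labels w!0, ..., w!(k-1).\<close>
definition word_count :: "nat \<Rightarrow> real \<Rightarrow> nat \<Rightarrow> nat \<Rightarrow> nat \<Rightarrow> nat \<Rightarrow> letter list \<Rightarrow> nat" where
  "word_count Q \<alpha> a1 q1 a2 q2 w =
     card {i. i < Q \<and> (\<forall>j < length w.
        gap_len Q \<alpha> ((i + j) mod Q) = letter_len \<alpha> a1 q1 a2 q2 (w ! j))}"

end

theory Submission
  imports Defs
begin

text \<open>
  Let \<open>N = Q - 1\<close>. Because \<open>a\<^sub>1/q\<^sub>1 < \<alpha> < a\<^sub>2/q\<^sub>2\<close> are Farey neighbours of order \<open>N\<close>,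
  among the \<open>{d\<alpha>}\<close> with \<open>1 \<le> d \<le> N\<close> the smallest is \<open>{q\<^sub>1\<alpha>} = A\<close> and the largest is
  \<open>{q\<^sub>2\<alpha>} = 1 - B\<close>, both attained only once. From this one reads off the three gap theorem
  in the following form: the point following \<open>{n\<alpha>}\<close> on the circle is \<open>{T(n)\<alpha>}\<close>, where \<open>T\<close> is
  the exchange of three intervals of \<open>{0,\<dots>,Q-1}\<close> given by \<open>T(n) = n + q\<^sub>1\<close> on \<open>[0, Q - q\<^sub>1)\<close>
  (gap \<open>A\<close>), \<open>T(n) = n - q\<^sub>2\<close> on \<open>[q\<^sub>2, Q)\<close> (gap \<open>B\<close>) and \<open>T(n) = n + q\<^sub>1 - q\<^sub>2\<close> on
  \<open>[Q - q\<^sub>1, q\<^sub>2)\<close> (gap \<open>C\<close>). Since \<open>T\<close> is a translation on each interval, the indices whose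
  next \<open>k\<close> gaps read a given word form an interval \<open>[L, U)\<close>, where \<open>L\<close> and \<open>U\<close> are
  maxima and minima of linear forms in \<open>(Q, q\<^sub>1, q\<^sub>2)\<close>. These are positively homogeneous, so
  the proportion \<open>(U - L)/Q\<close> is a continuous function of \<open>(q\<^sub>1/Q, q\<^sub>2/Q)\<close>.
\<close>

section \<open>Cylinders of a three-interval exchange\<close>

text \<open>A letter \<open>c\<close> labels the interval \<open>[label_lower c, label_upper c)\<close>, on which the
  exchange is the translation by \<open>label_shift c\<close>; the parameters \<open>Q, x, y\<close> stand for
  \<open>Q, q\<^sub>1, q\<^sub>2\<close>.\<close>

fun label_lower :: "'a::linordered_idom \<Rightarrow> 'a \<Rightarrow> 'a \<Rightarrow> letter \<Rightarrow> 'a" where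
  "label_lower Q x y LA = 0"
| "label_lower Q x y LB = y"
| "label_lower Q x y LC = Q - x"

fun label_upper :: "'a::linordered_idom \<Rightarrow> 'a \<Rightarrow> 'a \<Rightarrow> letter \<Rightarrow> 'a" where
  "label_upper Q x y LA = Q - x"
| "label_upper Q x y LB = Q"
| "label_upper Q x y LC = y"

fun label_shift :: "'a::linordered_idom \<Rightarrow> 'a \<Rightarrow> 'a \<Rightarrow> letter \<Rightarrow> 'a" where
  "label_shift Q x y LA = x"
| "label_shift Q x y LB = - y"
| "label_shift Q x y LC = x - y"

fun in_cylinder :: "'a::linordered_idom \<Rightarrow> 'a \<Rightarrow> 'a \<Rightarrow> 'a \<Rightarrow> letter list \<Rightarrow> bool" where
  "in_cylinder Q x y z [] = True"
| "in_cylinder Q x y z (c # cs) \<longleftrightarrow>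
     label_lower Q x y c \<le> z \<and> z < label_upper Q x y c \<and>
     in_cylinder Q x y (z + label_shift Q x y c) cs"

fun cylinder_lower :: "'a::linordered_idom \<Rightarrow> 'a \<Rightarrow> 'a \<Rightarrow> 'a \<Rightarrow> letter list \<Rightarrow> 'a" where
  "cylinder_lower Q x y s [] = 0"
| "cylinder_lower Q x y s (c # cs) =
     (if cs = [] then label_lower Q x y c - s
      else max (label_lower Q x y c - s) (cylinder_lower Q x y (s + label_shift Q x y c) cs))"

fun cylinder_upper :: "'a::linordered_idom \<Rightarrow> 'a \<Rightarrow> 'a \<Rightarrow> 'a \<Rightarrow> letter list \<Rightarrow> 'a" where
  "cylinder_upper Q x y s [] = 0"
| "cylinder_upper Q x y s (c # cs) =
     (if cs = [] then label_upper Q x y c - s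
      else min (label_upper Q x y c - s) (cylinder_upper Q x y (s + label_shift Q x y c) cs))"

lemma in_cylinder_iff_bounds:
  assumes "w \<noteq> []"
  shows "in_cylinder Q x y (n + s) w \<longleftrightarrow>
    cylinder_lower Q x y s w \<le> n \<and> n < cylinder_upper Q x y s w"
  using assms
proof (induction w arbitrary: s)
  case (Cons c cs)
  show ?case
  proof (cases "cs = []")
    case False
    then have "in_cylinder Q x y (n + s + label_shift Q x y c) cs \<longleftrightarrow>
        cylinder_lower Q x y (s + label_shift Q x y c) cs \<le> n \<and>
        n < cylinder_upper Q x y (s + label_shift Q x y c) cs"
      using Cons.IH[of "s + label_shift Q x y c"] by (simp add: add.assoc)
    with False show ?thesis by (auto simp: algebra_simps)
  qed (auto simp: algebra_simps)
qed simp

lemma cylinder_lower_ge_hd: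
  "w \<noteq> [] \<Longrightarrow> label_lower Q x y (hd w) - s \<le> cylinder_lower Q x y s w"
  by (cases w) auto

lemma cylinder_upper_le_hd:
  "w \<noteq> [] \<Longrightarrow> cylinder_upper Q x y s w \<le> label_upper Q x y (hd w) - s"
  by (cases w) auto

lemma of_int_cylinder_lower:
  "of_int (cylinder_lower Q x y s w) =
    (cylinder_lower (of_int Q) (of_int x) (of_int y) (of_int s) w :: 'b::linordered_idom)"
proof (induction w arbitrary: s)
  case (Cons c cs)
  then show ?case by (cases c) (auto simp: of_int_max)
qed simp

lemma of_int_cylinder_upper:
  "of_int (cylinder_upper Q x y s w) =
    (cylinder_upper (of_int Q) (of_int x) (of_int y) (of_int s) w :: 'b::linordered_idom)"
proof (induction w arbitrary: s)
  case (Cons c cs)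
  then show ?case by (cases c) (auto simp: of_int_min)
qed simp

lemma cylinder_lower_scale:
  fixes t :: real
  assumes "t > 0"
  shows "cylinder_lower (t * Q) (t * x) (t * y) (t * s) w = t * cylinder_lower Q x y s w"
proof (induction w arbitrary: s)
  case (Cons c cs)
  have "t * s + label_shift (t * Q) (t * x) (t * y) c = t * (s + label_shift Q x y c)"
    "label_lower (t * Q) (t * x) (t * y) c - t * s = t * (label_lower Q x y c - s)"
    by (cases c; simp add: algebra_simps)+
  with Cons.IH assms show ?case by (simp add: max_mult_distrib_left)
qed simp

lemma cylinder_upper_scale:
  fixes t :: real
  assumes "t > 0"
  shows "cylinder_upper (t * Q) (t * x) (t * y) (t * s) w = t * cylinder_upper Q x y s w"
proof (induction w arbitrary: s)
  case (Cons c cs)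
  have "t * s + label_shift (t * Q) (t * x) (t * y) c = t * (s + label_shift Q x y c)"
    "label_upper (t * Q) (t * x) (t * y) c - t * s = t * (label_upper Q x y c - s)"
    by (cases c; simp add: algebra_simps)+
  with Cons.IH assms show ?case by (simp add: min_mult_distrib_left)
qed simp

lemma continuous_on_cylinder_lower:
  "continuous_on UNIV s \<Longrightarrow>
    continuous_on UNIV (\<lambda>p::real \<times> real. cylinder_lower 1 (fst p) (snd p) (s p) w)"
proof (induction w arbitrary: s)
  case (Cons c cs)
  have "continuous_on UNIV (\<lambda>p::real \<times> real. label_lower 1 (fst p) (snd p) c - s p)"
    "continuous_on UNIV (\<lambda>p::real \<times> real. s p + label_shift 1 (fst p) (snd p) c)"
    using Cons.prems by (cases c; auto intro!: continuous_intros)+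
  with Cons.IH show ?case by (cases "cs = []") (auto intro!: continuous_intros)
qed simp

lemma continuous_on_cylinder_upper:
  "continuous_on UNIV s \<Longrightarrow>
    continuous_on UNIV (\<lambda>p::real \<times> real. cylinder_upper 1 (fst p) (snd p) (s p) w)"
proof (induction w arbitrary: s)
  case (Cons c cs)
  have "continuous_on UNIV (\<lambda>p::real \<times> real. label_upper 1 (fst p) (snd p) c - s p)"
    "continuous_on UNIV (\<lambda>p::real \<times> real. s p + label_shift 1 (fst p) (snd p) c)"
    using Cons.prems by (cases c; auto intro!: continuous_intros)+
  with Cons.IH show ?case by (cases "cs = []") (auto intro!: continuous_intros)
qed simp

definition word_density :: "letter list \<Rightarrow> real \<times> real \<Rightarrow> real" where
  "word_density w p = min 1 (max 0
     (cylinder_upper 1 (fst p) (snd p) 0 w - cylinder_lower 1 (fst p) (snd p) 0 w))"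

lemma continuous_on_word_density: "continuous_on S (word_density w)"
proof -
  have "continuous_on UNIV (word_density w)"
    unfolding word_density_def
    using continuous_on_cylinder_lower[of "\<lambda>_. 0" w] continuous_on_cylinder_upper[of "\<lambda>_. 0" w]
    by (auto intro!: continuous_intros)
  then show ?thesis using continuous_on_subset by blast
qed

lemma word_density_range: "word_density w p \<in> {0..1}"
  by (simp add: word_density_def)

lemma word_density_letters:
  assumes "(x, y) \<in> Tri"
  shows "word_density [LA] (x, y) = 1 - x" "word_density [LB] (x, y) = 1 - y"
    "word_density [LC] (x, y) = x + y - 1"
  using assms by (auto simp: word_density_def Tri_def)

section \<open>The extreme values of \<open>{d\<alpha>}\<close> between Farey neighbours\<close>

lemma irrational_mult_notin_Ints:
  assumes "(\<alpha>::real) \<notin> \<rat>" "d \<noteq> 0"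
  shows "real_of_int d * \<alpha> \<notin> \<int>"
proof
  assume "real_of_int d * \<alpha> \<in> \<int>"
  then obtain k where "real_of_int d * \<alpha> = of_int k" by (auto elim: Ints_cases)
  with assms(2) have "\<alpha> = of_int k / of_int d" by (auto simp: field_simps)
  with assms(1) show False by (simp add: Rats_divide)
qed

lemma frac_unique_shift: "(y::real) - v = of_int k \<Longrightarrow> 0 \<le> v \<Longrightarrow> v < 1 \<Longrightarrow> frac y = v"
  by (simp add: frac_unique_iff)

lemma frac_of_neg: "-1 \<le> (v::real) \<Longrightarrow> v < 0 \<Longrightarrow> frac v = v + 1"
  by (rule frac_unique_shift[where k = "-1"]) auto

lemma frac_int_minus:
  assumes "x \<notin> \<int>"
  shows "frac (of_int k - x) = 1 - frac (x::real)"
proof -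
  have "frac (of_int k - x) = frac (- x)"
    using frac_add_of_int_right[of "- x" k] by (simp add: add.commute)
  with assms show ?thesis by (simp add: frac_neg)
qed

lemma mult_ne_of_coprime:
  assumes "coprime a q" "0 < d" "d < q"
  shows "c * int q \<noteq> int a * int d"
proof
  assume "c * int q = int a * int d"
  then have "q dvd a * d"
    by (metis dvd_triv_right of_nat_dvd_iff of_nat_mult)
  with assms(1) have "q dvd d"
    by (simp add: coprime_dvd_mult_right_iff coprime_commute)
  with assms(2,3) show False by (simp add: nat_dvd_not_less)
qed

text \<open>The bound \<open>r\<close> is \<open>a\<^sub>2/q\<^sub>2\<close> for \<open>\<alpha>\<close> itself and \<open>1 - a\<^sub>1/q\<^sub>1\<close> for the reflected
  \<open>1 - \<alpha>\<close>.\<close>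

locale left_farey_neighbour =
  fixes N a1 q1 :: nat and \<alpha> r :: real
  assumes irrational: "\<alpha> \<notin> \<rat>" and \<alpha>_pos: "0 < \<alpha>" and \<alpha>_lt_1: "\<alpha> < 1"
    and q1_pos: "1 \<le> q1" and q1_le: "q1 \<le> N" and coprime: "coprime a1 q1"
    and left: "real a1 / real q1 < \<alpha>" and right: "\<alpha> < r"
    and nothing_between: "\<forall>a q. 1 \<le> q \<and> q \<le> N \<and> a \<le> q \<longrightarrow>
      \<not> (real a1 / real q1 < real a / real q \<and> real a / real q < r)"
begin

lemma distance_pos: "real q1 * \<alpha> - real a1 > 0"
  using left q1_pos by (simp add: field_simps)

lemma floor_mult_le:
  assumes "1 \<le> d" "d \<le> N"
  shows "of_int \<lfloor>real d * \<alpha>\<rfloor> * real q1 \<le> real a1 * real d"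
proof (rule ccontr)
  define c where "c = \<lfloor>real d * \<alpha>\<rfloor>"
  assume "\<not> ?thesis"
  then have "real a1 / real q1 < real (nat c) / real d"
    using q1_pos assms \<alpha>_pos by (simp add: c_def field_simps)
  moreover have "real (nat c) / real d < r"
  proof -
    have "real (nat c) \<le> real d * \<alpha>" using assms \<alpha>_pos by (simp add: c_def)
    moreover have "real d * \<alpha> < real d * r" using assms right by simp
    ultimately have "real (nat c) < r * real d" by (simp add: mult.commute)
    then show ?thesis using assms by (simp add: pos_divide_less_eq)
  qed
  moreover have "nat c \<le> d"
    using \<alpha>_lt_1 \<alpha>_pos mult_left_le[of \<alpha> "real d"] by (simp add: c_def nat_le_iff floor_le_iff)
  ultimately show False using nothing_between assms by blast
qed

text \<open>For \<open>d < q\<^sub>1\<close> the complementary fraction \<open>(a\<^sub>1 - \<lfloor>d\<alpha>\<rfloor>)/(q\<^sub>1 - d)\<close> lies right of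
  \<open>a\<^sub>1/q\<^sub>1\<close>, hence right of \<open>r\<close> and so of \<open>\<alpha>\<close>.\<close>

lemma frac_mult_gt_of_lt:
  assumes "1 \<le> d" "d < q1"
  shows "frac (real d * \<alpha>) > real q1 * \<alpha> - real a1"
proof -
  define c where "c = \<lfloor>real d * \<alpha>\<rfloor>"
  define d' where "d' = q1 - d"
  define c' where "c' = int a1 - c"
  have d': "1 \<le> d'" "d' \<le> N" "real d' = real q1 - real d"
    using assms q1_le by (auto simp: d'_def of_nat_diff)
  have "real_of_int (c * int q1) \<noteq> real_of_int (int a1 * int d)"
    using mult_ne_of_coprime[OF coprime, of d c] assms by (simp only: of_int_eq_iff) simp
  with floor_mult_le[of d] assms q1_le
  have "real_of_int c * real q1 < real a1 * real d" by (simp add: c_def)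
  then have c'_right: "real_of_int c' * real q1 > real a1 * real d'"
    by (simp add: c'_def d'(3) algebra_simps)
  then have "0 < real_of_int c' * real q1"
    by (meson mult_nonneg_nonneg of_nat_0_le_iff le_less_trans)
  then have c'_pos: "c' > 0" using q1_pos by (simp add: zero_less_mult_iff)
  have "real_of_int c' > real d' * \<alpha>"
  proof (cases "c' > int d'")
    case True
    then have "real_of_int c' > real d'" by linarith
    then show ?thesis using \<alpha>_lt_1 mult_left_le[of \<alpha> "real d'"] \<alpha>_pos by linarith
  next
    case False
    have "real a1 * real d' < real (nat c') * real q1" using c'_right c'_pos by simp
    then have "real a1 / real q1 < real (nat c') / real d'"
      using d'(1) q1_pos by (simp add: field_simps)
    with nothing_between[rule_format, of d' "nat c'"] d' False c'_pos
    have "\<not> real (nat c') / real d' < r" by (simp add: nat_le_iff)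
    with right have "real (nat c') / real d' > \<alpha>" by simp
    then show ?thesis using d'(1) c'_pos by (simp add: field_simps)
  qed
  then show ?thesis by (simp add: c'_def c_def d'(3) frac_def algebra_simps)
qed

lemma frac_mult_min:
  assumes "1 \<le> d" "d \<le> N"
  shows "real q1 * \<alpha> - real a1 \<le> frac (real d * \<alpha>)"
    and "frac (real d * \<alpha>) = real q1 * \<alpha> - real a1 \<Longrightarrow> d = q1"
proof -
  have "real q1 * \<alpha> - real a1 \<le> frac (real d * \<alpha>) \<and>
      (frac (real d * \<alpha>) = real q1 * \<alpha> - real a1 \<longrightarrow> d = q1)"
  proof (cases "q1 \<le> d")
    case True
    define c where "c = \<lfloor>real d * \<alpha>\<rfloor>"
    have le_d: "real d * (real q1 * \<alpha> - real a1) \<le> real q1 * (real d * \<alpha> - c)"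
      using floor_mult_le[OF assms] by (simp add: c_def algebra_simps)
    have "real q1 * (real q1 * \<alpha> - real a1) \<le> real d * (real q1 * \<alpha> - real a1)"
      using True distance_pos by (intro mult_right_mono) auto
    from order_trans[OF this le_d] have "real q1 * \<alpha> - real a1 \<le> real d * \<alpha> - c"
      by (rule mult_left_le_imp_le) (use q1_pos in simp)
    moreover have "real d \<le> real q1" if "real d * \<alpha> - c = real q1 * \<alpha> - real a1"
      using le_d distance_pos unfolding that by (rule mult_right_le_imp_le)
    ultimately show ?thesis using True by (simp add: c_def frac_def)
  qed (use frac_mult_gt_of_lt[OF assms(1)] in auto)
  then show "real q1 * \<alpha> - real a1 \<le> frac (real d * \<alpha>)"
    and "frac (real d * \<alpha>) = real q1 * \<alpha> - real a1 \<Longrightarrow> d = q1" by auto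
qed

end

section \<open>The three gap theorem as a three-interval exchange\<close>

locale three_gap =
  fixes Q :: nat and \<alpha> :: real and a1 q1 a2 q2 :: nat
  assumes Q_ge_2: "Q \<ge> 2" and irrational: "\<alpha> \<notin> \<rat>" and \<alpha>_pos: "0 < \<alpha>" and \<alpha>_lt_1: "\<alpha> < 1"
    and farey: "farey_nbrs (Q - 1) \<alpha> a1 q1 a2 q2"
begin

abbreviation "N \<equiv> Q - 1"
abbreviation "len \<equiv> letter_len \<alpha> a1 q1 a2 q2"

definition "A = real q1 * \<alpha> - real a1"
definition "B = real a2 - real q2 * \<alpha>"

lemma len_simps [simp]: "len LA = A" "len LB = B" "len LC = A + B"
  by (simp_all add: A_def B_def)

declare letter_len.simps [simp del]

lemma
  q1_pos: "1 \<le> q1" and q1_le: "q1 \<le> N" and q2_pos: "1 \<le> q2" and q2_le: "q2 \<le> N"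
  and a1_le: "a1 \<le> q1" and a2_le: "a2 \<le> q2" and coprime1: "coprime a1 q1" and coprime2: "coprime a2 q2"
  and left: "real a1 / real q1 < \<alpha>" and right: "\<alpha> < real a2 / real q2"
  and nothing_between: "\<forall>a q. 1 \<le> q \<and> q \<le> N \<and> a \<le> q \<longrightarrow>
        \<not> (real a1 / real q1 < real a / real q \<and> real a / real q < real a2 / real q2)"
  using farey unfolding farey_nbrs_def by auto

lemma left_neighbour: "left_farey_neighbour N a1 q1 \<alpha> (real a2 / real q2)"
  by unfold_locales
    (use irrational \<alpha>_pos \<alpha>_lt_1 q1_pos q1_le coprime1 left right nothing_between in auto)

lemma reflected_right_neighbour:
  "left_farey_neighbour N (q2 - a2) q2 (1 - \<alpha>) (1 - real a1 / real q1)"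
proof unfold_locales
  show "1 - \<alpha> \<notin> \<rat>"
    using irrational Rats_diff[OF Rats_1, of "1 - \<alpha>"] by auto
  show "coprime (q2 - a2) q2"
    using a2_le coprime2 by (simp add: coprime_iff_gcd_eq_1 gcd_diff2_nat)
  have reflect: "real (q - a) / real q = 1 - real a / real q" if "1 \<le> q" "a \<le> q" for a q :: nat
    using that by (simp add: of_nat_diff field_simps)
  show "real (q2 - a2) / real q2 < 1 - \<alpha>"
    using right reflect[OF q2_pos a2_le] by simp
  show "\<forall>a q. 1 \<le> q \<and> q \<le> N \<and> a \<le> q \<longrightarrow> \<not> (real (q2 - a2) / real q2 < real a / real q \<and>
      real a / real q < 1 - real a1 / real q1)"
  proof (intro allI impI)
    fix a q :: nat assume aq: "1 \<le> q \<and> q \<le> N \<and> a \<le> q"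
    then have "\<not> (real a1 / real q1 < real (q - a) / real q \<and> real (q - a) / real q < real a2 / real q2)"
      using nothing_between[rule_format, of q "q - a"] by auto
    with aq show "\<not> (real (q2 - a2) / real q2 < real a / real q \<and> real a / real q < 1 - real a1 / real q1)"
      using reflect[OF q2_pos a2_le] reflect[of q a] by auto
  qed
qed (use \<alpha>_pos \<alpha>_lt_1 q2_pos q2_le left in auto)

lemma mult_notin_Ints: "1 \<le> d \<Longrightarrow> real d * \<alpha> \<notin> \<int>"
  using irrational_mult_notin_Ints[OF irrational, of "int d"] by simp

lemma frac_mult_pos: "1 \<le> d \<Longrightarrow> frac (real d * \<alpha>) > 0"
  using mult_notin_Ints frac_ge_0 frac_eq_0_iff by (metis order_le_less)

lemma frac_mult_ge_A:
  assumes "1 \<le> d" "d \<le> N"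
  shows "A \<le> frac (real d * \<alpha>)" and "frac (real d * \<alpha>) = A \<Longrightarrow> d = q1"
  using left_farey_neighbour.frac_mult_min[OF left_neighbour assms] by (auto simp: A_def)

lemma one_minus_frac_mult_ge_B:
  assumes "1 \<le> d" "d \<le> N"
  shows "B \<le> 1 - frac (real d * \<alpha>)" and "1 - frac (real d * \<alpha>) = B \<Longrightarrow> d = q2"
proof -
  have "frac (real d * (1 - \<alpha>)) = 1 - frac (real d * \<alpha>)"
    using frac_int_minus[OF mult_notin_Ints[OF assms(1)], of "int d"] by (simp add: algebra_simps)
  moreover have "real q2 * (1 - \<alpha>) - real (q2 - a2) = B"
    using a2_le by (simp add: B_def of_nat_diff algebra_simps)
  ultimately show "B \<le> 1 - frac (real d * \<alpha>)" and "1 - frac (real d * \<alpha>) = B \<Longrightarrow> d = q2"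
    using left_farey_neighbour.frac_mult_min[OF reflected_right_neighbour assms] by auto
qed

lemma A_pos: "A > 0"
  using left q1_pos by (simp add: A_def field_simps)

lemma B_pos: "B > 0"
  using right q2_pos by (simp add: B_def field_simps)

lemma A_lt_1: "A < 1"
  using frac_mult_ge_A(1)[OF q1_pos q1_le] frac_lt_1 by (meson le_less_trans)

lemma B_lt_1: "B < 1"
  using one_minus_frac_mult_ge_B(1)[OF q2_pos q2_le] frac_mult_pos[OF q2_pos] by linarith

lemma frac_q1_mult: "frac (real q1 * \<alpha>) = A"
  by (rule frac_unique_shift[where k = "int a1"]) (use A_pos A_lt_1 in \<open>auto simp: A_def\<close>)

lemma frac_q2_mult: "frac (real q2 * \<alpha>) = 1 - B"
  by (rule frac_unique_shift[where k = "int a2 - 1"]) (use B_pos B_lt_1 in \<open>auto simp: B_def\<close>)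

text \<open>Otherwise the mediant \<open>(a\<^sub>1 + a\<^sub>2)/(q\<^sub>1 + q\<^sub>2)\<close> would lie between the neighbours.\<close>

lemma Q_le_q1_plus_q2: "Q \<le> q1 + q2"
proof (rule ccontr)
  assume "\<not> ?thesis"
  then have mediant: "1 \<le> q1 + q2" "q1 + q2 \<le> N" "a1 + a2 \<le> q1 + q2"
    using q1_pos a1_le a2_le by auto
  have "real a1 / real q1 < real a2 / real q2" using left right by simp
  then have "real a1 * real q2 < real a2 * real q1"
    using q1_pos q2_pos by (simp add: field_simps)
  then have "real a1 / real q1 < real (a1 + a2) / real (q1 + q2)"
    "real (a1 + a2) / real (q1 + q2) < real a2 / real q2"
    using q1_pos q2_pos by (simp_all add: field_simps)
  with nothing_between mediant show False by blast
qed

lemma len_inj: "len c = len c' \<Longrightarrow> c = c'"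
proof -
  assume eq: "len c = len c'"
  have "A \<noteq> B"
  proof
    assume "A = B"
    then have "real (q1 + q2) * \<alpha> = of_int (int (a1 + a2))" by (simp add: A_def B_def algebra_simps)
    with mult_notin_Ints[of "q1 + q2"] show False by (metis Ints_of_int le_add1 order_trans q1_pos)
  qed
  with eq A_pos B_pos show ?thesis by (cases c; cases c') auto
qed

lemma len_pos: "len c > 0"
  using A_pos B_pos by (cases c) auto

definition pt :: "nat \<Rightarrow> real" where
  "pt n = frac (real n * \<alpha>)"

definition circ_dist :: "nat \<Rightarrow> nat \<Rightarrow> real" where
  "circ_dist n m = frac (pt m - pt n)"

lemma circ_dist_eq: "circ_dist n m = frac ((real m - real n) * \<alpha>)"
proof -
  have "pt m - pt n = (real m - real n) * \<alpha> + of_int (\<lfloor>real n * \<alpha>\<rfloor> - \<lfloor>real m * \<alpha>\<rfloor>)"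
    by (simp add: pt_def frac_def algebra_simps)
  then show ?thesis by (simp only: circ_dist_def frac_add_of_int_right)
qed

lemma circ_dist_self: "circ_dist n n = 0"
  by (simp add: circ_dist_def)

lemma circ_dist_of_less: "n < m \<Longrightarrow> circ_dist n m = frac (real (m - n) * \<alpha>)"
  by (simp add: circ_dist_eq of_nat_diff)

lemma circ_dist_of_greater: "m < n \<Longrightarrow> circ_dist n m = 1 - frac (real (n - m) * \<alpha>)"
  using frac_int_minus[OF mult_notin_Ints[of "n - m"], of 0]
  by (simp add: circ_dist_eq of_nat_diff algebra_simps)

lemma circ_dist_inj: "circ_dist n m = circ_dist n m' \<Longrightarrow> m = m'"
proof (rule ccontr)
  assume "circ_dist n m = circ_dist n m'" "m \<noteq> m'"
  then obtain k where "(real m - real n) * \<alpha> = (real m' - real n) * \<alpha> + of_int k"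
    by (auto simp: circ_dist_eq elim: frac_eqE)
  then have "real_of_int (int m - int m') * \<alpha> = of_int k" by (simp add: algebra_simps)
  with irrational_mult_notin_Ints[OF irrational] \<open>m \<noteq> m'\<close> show False by (metis Ints_of_int eq_iff_diff_eq_0 of_nat_eq_iff)
qed

definition label :: "nat \<Rightarrow> letter" where
  "label n = (if n + q1 < Q then LA else if q2 \<le> n then LB else LC)"

definition succ :: "nat \<Rightarrow> nat" where
  "succ n = (if n + q1 < Q then n + q1 else if q2 \<le> n then n - q2 else n + q1 - q2)"

lemma succ_lt: "n < Q \<Longrightarrow> succ n < Q"
  using Q_le_q1_plus_q2 q1_pos q1_le q2_le by (auto simp: succ_def)

lemma succ_eq_shift: "n < Q \<Longrightarrow> int (succ n) = int n + label_shift (int Q) (int q1) (int q2) (label n)"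
  using Q_le_q1_plus_q2 q1_le q2_le by (auto simp: succ_def label_def of_nat_diff)

lemma label_eq_iff:
  "n < Q \<Longrightarrow> label n = c \<longleftrightarrow>
    label_lower (int Q) (int q1) (int q2) c \<le> int n \<and> int n < label_upper (int Q) (int q1) (int q2) c"
  using Q_le_q1_plus_q2 by (cases c) (auto simp: label_def)

lemma circ_dist_ge_A:
  assumes n: "n + q1 < Q" and m: "m < Q" "m \<noteq> n"
  shows "A \<le> circ_dist n m"
proof (cases "n < m")
  case True
  then show ?thesis using frac_mult_ge_A(1)[of "m - n"] m by (simp add: circ_dist_of_less)
next
  case False
  then have mn: "m < n" using m by simp
  define d where "d = n - m"
  have d: "1 \<le> d" "d + q1 \<le> N" using mn n by (auto simp: d_def)
  define f where "f = frac (real d * \<alpha>)"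
  have f_lt_1: "f < 1" by (simp add: f_def frac_lt_1)
  have "f + A < 1"
  proof (rule ccontr)
    assume "\<not> ?thesis"
    then have "frac (real (d + q1) * \<alpha>) = f + A - 1"
      by (intro frac_unique_shift[where k = "\<lfloor>real d * \<alpha>\<rfloor> + int a1 + 1"])
         (use f_lt_1 A_lt_1 in \<open>auto simp: f_def frac_def A_def algebra_simps\<close>)
    with frac_mult_ge_A(1)[of "d + q1"] d f_lt_1 show False by simp
  qed
  then show ?thesis using mn by (simp add: circ_dist_of_greater d_def[symmetric] f_def)
qed

lemma circ_dist_ge_B:
  assumes n: "q2 \<le> n" "n < Q" and m: "m < Q" "m \<noteq> n"
  shows "B \<le> circ_dist n m"
proof (cases "n < m")
  case False
  then show ?thesis using one_minus_frac_mult_ge_B(1)[of "n - m"] n m by (simp add: circ_dist_of_greater)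
next
  case True
  define d where "d = m - n"
  have d: "1 \<le> d" "d + q2 \<le> N" using True n m by (auto simp: d_def)
  define f where "f = frac (real d * \<alpha>)"
  have f_pos: "f > 0" using frac_mult_pos d by (simp add: f_def)
  have f_lt_1: "f < 1" by (simp add: f_def frac_lt_1)
  have "B \<le> f"
  proof (rule ccontr)
    assume "\<not> ?thesis"
    then have "frac (real (d + q2) * \<alpha>) = f + 1 - B"
      by (intro frac_unique_shift[where k = "\<lfloor>real d * \<alpha>\<rfloor> + int a2 - 1"])
         (use f_pos B_pos B_lt_1 in \<open>auto simp: f_def frac_def B_def algebra_simps\<close>)
    with one_minus_frac_mult_ge_B(1)[of "d + q2"] d f_pos show False by simp
  qed
  then show ?thesis using True by (simp add: circ_dist_of_less d_def[symmetric] f_def)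
qed

lemma circ_dist_ge_A_plus_B:
  assumes n: "\<not> n + q1 < Q" "n < q2" and m: "m < Q" "m \<noteq> n"
  shows "A + B \<le> circ_dist n m"
proof (cases "n < m")
  case True
  define d where "d = m - n"
  have d: "1 \<le> d" "d < q1" using True n m by (auto simp: d_def)
  define f where "f = frac (real d * \<alpha>)"
  have f_lt_1: "f < 1" by (simp add: f_def frac_lt_1)
  have "f \<noteq> A" "A \<le> f" using frac_mult_ge_A[of d] d q1_le by (auto simp: f_def)
  then have "f > A" by simp
  then have "frac (real (q1 - d) * \<alpha>) = A + 1 - f"
    by (intro frac_unique_shift[where k = "int a1 - \<lfloor>real d * \<alpha>\<rfloor> - 1"])
       (use f_lt_1 A_pos d in \<open>auto simp: f_def frac_def A_def algebra_simps of_nat_diff\<close>)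
  then have "B \<le> f - A" using one_minus_frac_mult_ge_B(1)[of "q1 - d"] d q1_le by simp
  then show ?thesis using True by (simp add: circ_dist_of_less d_def[symmetric] f_def)
next
  case False
  then have mn: "m < n" using m by simp
  define d where "d = n - m"
  have d: "1 \<le> d" "d < q2" using mn n by (auto simp: d_def)
  define g where "g = 1 - frac (real d * \<alpha>)"
  have g_lt_1: "g < 1" using frac_mult_pos[OF d(1)] by (simp add: g_def)
  have "g \<noteq> B" "B \<le> g" using one_minus_frac_mult_ge_B[of d] d q2_le by (auto simp: g_def)
  then have "g > B" by simp
  then have "frac (real (q2 - d) * \<alpha>) = g - B"
    by (intro frac_unique_shift[where k = "int a2 - \<lfloor>real d * \<alpha>\<rfloor> - 1"])
       (use g_lt_1 d B_pos[unfolded B_def] in \<open>auto simp: g_def frac_def B_def algebra_simps of_nat_diff\<close>)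
  then have "A \<le> g - B" using frac_mult_ge_A(1)[of "q2 - d"] d q2_le by simp
  then show ?thesis using mn by (simp add: circ_dist_of_greater d_def[symmetric] g_def)
qed

lemma circ_dist_ge_len:
  assumes "n < Q" "m < Q" "m \<noteq> n"
  shows "len (label n) \<le> circ_dist n m"
  using circ_dist_ge_A[of n m] circ_dist_ge_B[of n m] circ_dist_ge_A_plus_B[of n m] assms
  by (auto simp: label_def)

lemma circ_dist_succ:
  assumes n: "n < Q"
  shows "circ_dist n (succ n) = len (label n)"
proof (cases "n + q1 < Q")
  case True
  then show ?thesis using q1_pos frac_q1_mult by (simp add: succ_def label_def circ_dist_of_less)
next
  case not_A: False
  show ?thesis
  proof (cases "q2 \<le> n")
    case True
    with not_A show ?thesis
      using q2_pos frac_q2_mult by (simp add: succ_def label_def circ_dist_of_greater)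
  next
    case False
    define m where "m = (if n = 0 then 1 else 0::nat)"
    have "m < Q" "m \<noteq> n" using Q_ge_2 by (auto simp: m_def)
    then have "A + B \<le> circ_dist n m" using circ_dist_ge_A_plus_B not_A False by simp
    then have A_plus_B_lt_1: "A + B < 1" using frac_lt_1 by (metis circ_dist_def le_less_trans)
    have succ_n: "real (succ n) = real n + real q1 - real q2"
      using not_A False q2_le by (simp add: succ_def of_nat_diff)
    have "(real (succ n) - real n) * \<alpha> = (A + B) + of_int (int a1 - int a2)"
      by (simp add: succ_n A_def B_def algebra_simps)
    then have "circ_dist n (succ n) = A + B" using A_plus_B_lt_1 A_pos B_pos
      by (simp only: circ_dist_eq frac_add_of_int_right) simp
    with not_A False show ?thesis by (simp add: label_def)
  qed
qed

abbreviation "pts \<equiv> sorted_pts Q \<alpha>"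

lemma pt_inj: "inj_on pt {..<Q}"
proof (rule inj_onI)
  fix m n assume mn: "m \<in> {..<Q}" "n \<in> {..<Q}" "pt m = pt n"
  show "m = n"
  proof (rule ccontr)
    assume "m \<noteq> n"
    then have "len (label n) \<le> circ_dist n m" using circ_dist_ge_len mn by simp
    moreover have "circ_dist n m = 0" using mn by (simp add: circ_dist_def)
    ultimately show False using len_pos[of "label n"] by simp
  qed
qed

lemma sorted_pts_eq: "pts = sort (map pt [0..<Q])"
  by (simp add: sorted_pts_def pt_def[abs_def])

lemma length_pts: "length pts = Q"
  by (simp add: sorted_pts_eq)

lemma set_pts: "set pts = pt ` {..<Q}"
  by (auto simp: sorted_pts_eq)

lemma pts_sorted: "sorted pts"
  by (simp add: sorted_pts_eq)

lemma distinct_pts: "distinct pts"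
  using pt_inj by (simp add: sorted_pts_eq distinct_map lessThan_atLeast0)

lemma pts_strict_mono: "i < j \<Longrightarrow> j < Q \<Longrightarrow> pts ! i < pts ! j"
  using sorted_nth_mono[OF pts_sorted, of i j] nth_eq_iff_index_eq[OF distinct_pts, of i j] length_pts
  by force

lemma pts_range: "i < Q \<Longrightarrow> 0 \<le> pts ! i \<and> pts ! i < 1"
  using nth_mem[of i pts] by (auto simp: length_pts set_pts pt_def frac_lt_1)

lemma pts_0: "pts ! 0 = 0"
proof -
  have "pt 0 \<in> set pts" using Q_ge_2 by (simp add: set_pts)
  then obtain j where j: "j < Q" "pts ! j = 0" using length_pts by (auto simp: in_set_conv_nth pt_def)
  then have "pts ! 0 \<le> pts ! j" using sorted_nth_mono[OF pts_sorted, of 0 j] length_pts by simp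
  then show ?thesis using j pts_range[of 0] Q_ge_2 by simp
qed

lemma gap_len_next_point:
  assumes i: "i < Q"
  shows "gap_len Q \<alpha> i = frac (pts ! (Suc i mod Q) - pts ! i)"
    and "j < Q \<Longrightarrow> j \<noteq> i \<Longrightarrow> frac (pts ! (Suc i mod Q) - pts ! i) \<le> frac (pts ! j - pts ! i)"
proof -
  have below: "frac (pts ! j - pts ! i) = pts ! j - pts ! i + 1" if "j < i" for j
    using that i pts_strict_mono[of j i] pts_range[of i] pts_range[of j] by (intro frac_of_neg) auto
  have "gap_len Q \<alpha> i = frac (pts ! (Suc i mod Q) - pts ! i) \<and>
    (\<forall>j<Q. j \<noteq> i \<longrightarrow> frac (pts ! (Suc i mod Q) - pts ! i) \<le> frac (pts ! j - pts ! i))"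
  proof (cases "Suc i < Q")
    case True
    have above: "frac (pts ! j - pts ! i) = pts ! j - pts ! i" if "Suc i \<le> j" "j < Q" for j
    proof -
      have "pts ! i < pts ! j" using that pts_strict_mono[of i j] by simp
      then show ?thesis using that pts_range[of i] pts_range[of j] i by (simp add: frac_eq)
    qed
    have "frac (pts ! Suc i - pts ! i) \<le> frac (pts ! j - pts ! i)" if "j < Q" "j \<noteq> i" for j
    proof (cases "j < i")
      case True
      then show ?thesis using below above[of "Suc i"] \<open>Suc i < Q\<close> pts_range[of j] pts_range[of "Suc i"] that
        by simp
    next
      case False
      then show ?thesis using above[of j] above[of "Suc i"] \<open>Suc i < Q\<close> that
        sorted_nth_mono[OF pts_sorted, of "Suc i" j] length_pts by simp
    qed
    with True above[of "Suc i"] show ?thesis by (simp add: gap_len_def Let_def)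
  next
    case False
    then have last: "Suc i = Q" using i by simp
    then have "0 < pts ! i" using pts_strict_mono[of 0 i] pts_0 Q_ge_2 by simp
    then have "frac (pts ! 0 - pts ! i) = 1 - pts ! i" using pts_0 pts_range[OF i] frac_of_neg[of "- pts ! i"] by simp
    moreover have "1 - pts ! i \<le> frac (pts ! j - pts ! i)" if "j < Q" "j \<noteq> i" for j
      using that last below[of j] pts_range[of j] by simp
    ultimately show ?thesis using last pts_0 by (simp add: gap_len_def Let_def)
  qed
  then show "gap_len Q \<alpha> i = frac (pts ! (Suc i mod Q) - pts ! i)"
    and "j < Q \<Longrightarrow> j \<noteq> i \<Longrightarrow> frac (pts ! (Suc i mod Q) - pts ! i) \<le> frac (pts ! j - pts ! i)" by auto
qed

definition point_index :: "nat \<Rightarrow> nat" where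
  "point_index i = inv_into {..<Q} pt (pts ! i)"

lemma point_index: "i < Q \<Longrightarrow> point_index i < Q \<and> pt (point_index i) = pts ! i"
  using nth_mem[of i pts] inv_into_into[of "pts ! i" pt "{..<Q}"]
  by (simp add: point_index_def length_pts set_pts f_inv_into_f)

lemma point_index_inj: "inj_on point_index {..<Q}"
proof (rule inj_onI)
  fix i j assume ij: "i \<in> {..<Q}" "j \<in> {..<Q}" "point_index i = point_index j"
  then have "pts ! i = pts ! j" using point_index by (metis lessThan_iff)
  with ij show "i = j" using nth_eq_iff_index_eq[OF distinct_pts] length_pts by simp
qed

lemma point_index_image: "point_index ` {..<Q} = {..<Q}"
  using point_index by (intro endo_inj_surj point_index_inj) auto

lemma point_index_next:
  assumes i: "i < Q"
  shows "point_index (Suc i mod Q) = succ (point_index i)"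
    and "gap_len Q \<alpha> i = len (label (point_index i))"
proof -
  define n where "n = point_index i"
  define m where "m = point_index (Suc i mod Q)"
  have n: "n < Q" "pt n = pts ! i" using point_index i by (auto simp: n_def)
  have m: "m < Q" "pt m = pts ! (Suc i mod Q)" using point_index Q_ge_2 by (auto simp: m_def)
  have "Suc i mod Q \<noteq> i"
  proof (cases "Suc i < Q")
    case False
    then have "Suc i = Q" using i by simp
    then show ?thesis using Q_ge_2 by auto
  qed simp
  then have "m \<noteq> n" using inj_onD[OF point_index_inj, of "Suc i mod Q" i] i Q_ge_2
    by (auto simp: m_def n_def)
  have gap: "gap_len Q \<alpha> i = circ_dist n m"
    using gap_len_next_point(1)[OF i] n m by (simp add: circ_dist_def)
  obtain j where j: "j < Q" "pts ! j = pt (succ n)"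
    using succ_lt[OF n(1)] nth_mem length_pts by (metis in_set_conv_nth imageI lessThan_iff set_pts)
  have "succ n \<noteq> n" using circ_dist_succ[OF n(1)] len_pos circ_dist_self by (metis less_irrefl)
  then have "j \<noteq> i" using inj_onD[OF pt_inj, of "succ n" n] j n succ_lt by auto
  then have "circ_dist n m \<le> circ_dist n (succ n)"
    using gap_len_next_point(2)[OF i j(1)] j n m by (simp add: circ_dist_def)
  with circ_dist_ge_len[OF n(1) m(1) \<open>m \<noteq> n\<close>] circ_dist_succ[OF n(1)]
  have "circ_dist n m = circ_dist n (succ n)" by simp
  then show "point_index (Suc i mod Q) = succ (point_index i)"
    using circ_dist_inj by (simp add: m_def n_def)
  show "gap_len Q \<alpha> i = len (label (point_index i))"
    using gap \<open>circ_dist n m = circ_dist n (succ n)\<close> circ_dist_succ[OF n(1)] by (simp add: n_def)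
qed

lemma point_index_add: "i < Q \<Longrightarrow> point_index ((i + j) mod Q) = (succ ^^ j) (point_index i)"
proof (induction j)
  case (Suc j)
  have "(i + Suc j) mod Q = Suc ((i + j) mod Q) mod Q" by (simp add: mod_Suc_eq)
  with Suc point_index_next(1)[of "(i + j) mod Q"] Q_ge_2 show ?case by simp
qed simp

section \<open>Counting words\<close>

lemma word_count_eq_card_itinerary:
  "word_count Q \<alpha> a1 q1 a2 q2 w = card {n. n < Q \<and> (\<forall>j<length w. label ((succ ^^ j) n) = w ! j)}"
proof -
  define P where "P n \<longleftrightarrow> (\<forall>j<length w. label ((succ ^^ j) n) = w ! j)" for n
  have gap: "gap_len Q \<alpha> ((i + j) mod Q) = len (label ((succ ^^ j) (point_index i)))" if "i < Q" for i j
    using point_index_next(2)[of "(i + j) mod Q"] point_index_add[OF that, of j] Q_ge_2 by simp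
  have "{i. i < Q \<and> (\<forall>j < length w. gap_len Q \<alpha> ((i + j) mod Q) = len (w ! j))}
      = {i \<in> {..<Q}. P (point_index i)}"
    using gap len_inj unfolding P_def by auto
  moreover have "card {i \<in> {..<Q}. P (point_index i)} = card (point_index ` {i \<in> {..<Q}. P (point_index i)})"
    using point_index_inj by (intro card_image[symmetric]) (auto intro: inj_on_subset)
  moreover have "point_index ` {i \<in> {..<Q}. P (point_index i)} = {n \<in> point_index ` {..<Q}. P n}"
    by auto
  ultimately show ?thesis unfolding word_count_def P_def point_index_image by simp
qed

lemma itinerary_iff_in_cylinder:
  "m < Q \<Longrightarrow> (\<forall>j<length w. label ((succ ^^ j) m) = w ! j) \<longleftrightarrow>
    in_cylinder (int Q) (int q1) (int q2) (int m) w"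
proof (induction w arbitrary: m)
  case (Cons c cs)
  have "(\<forall>j<length (c # cs). label ((succ ^^ j) m) = (c # cs) ! j) \<longleftrightarrow>
        label m = c \<and> (\<forall>j<length cs. label ((succ ^^ j) (succ m)) = cs ! j)"
    by (auto simp: less_Suc_eq_0_disj funpow_Suc_right simp del: funpow.simps)
  also have "\<dots> \<longleftrightarrow> in_cylinder (int Q) (int q1) (int q2) (int m) (c # cs)"
    using Cons.IH[of "succ m"] succ_lt[OF Cons.prems] succ_eq_shift[OF Cons.prems]
      label_eq_iff[OF Cons.prems, of c] by auto
  finally show ?case .
qed simp

lemma word_count_eq_cylinder:
  assumes w: "w \<noteq> []"
  shows "int (word_count Q \<alpha> a1 q1 a2 q2 w) =
    max 0 (cylinder_upper (int Q) (int q1) (int q2) 0 w - cylinder_lower (int Q) (int q1) (int q2) 0 w)"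
proof -
  define L where "L = cylinder_lower (int Q) (int q1) (int q2) 0 w"
  define U where "U = cylinder_upper (int Q) (int q1) (int q2) 0 w"
  have "0 \<le> L" using cylinder_lower_ge_hd[OF w, of "int Q" "int q1" "int q2" 0] q1_le Q_ge_2
    unfolding L_def by (cases "hd w") auto
  have "U \<le> int Q" using cylinder_upper_le_hd[OF w, of "int Q" "int q1" "int q2" 0] q2_le
    unfolding U_def by (cases "hd w") auto
  have "{n. n < Q \<and> (\<forall>j<length w. label ((succ ^^ j) n) = w ! j)} = {n. n < Q \<and> L \<le> int n \<and> int n < U}"
    using itinerary_iff_in_cylinder in_cylinder_iff_bounds[OF w, of "int Q" "int q1" "int q2" _ 0]
    by (auto simp: L_def U_def)
  also have "\<dots> = {nat L..<nat U}" using \<open>0 \<le> L\<close> \<open>U \<le> int Q\<close> by auto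
  finally show ?thesis using word_count_eq_card_itinerary \<open>0 \<le> L\<close>
    by (simp add: L_def[symmetric] U_def[symmetric])
qed

lemma word_count_le: "word_count Q \<alpha> a1 q1 a2 q2 w \<le> Q"
  using card_mono[of "{..<Q}"] unfolding word_count_def by (metis (no_types, lifting) card_lessThan
    finite_lessThan lessThan_iff mem_Collect_eq subsetI)

lemma word_count_density:
  assumes w: "w \<noteq> []"
  shows "real (word_count Q \<alpha> a1 q1 a2 q2 w) / real Q = word_density w (real q1 / real Q, real q2 / real Q)"
proof -
  let ?U = "cylinder_upper 1 (real q1 / real Q) (real q2 / real Q) 0 w"
  let ?L = "cylinder_lower 1 (real q1 / real Q) (real q2 / real Q) 0 w"
  have Q_pos: "real Q > 0" using Q_ge_2 by simp
  have "real (word_count Q \<alpha> a1 q1 a2 q2 w) =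
      max 0 (cylinder_upper (real Q) (real q1) (real q2) 0 w - cylinder_lower (real Q) (real q1) (real q2) 0 w)"
    using arg_cong[OF word_count_eq_cylinder[OF w], of real_of_int]
    by (simp add: of_int_cylinder_upper of_int_cylinder_lower of_int_max)
  also have "\<dots> = real Q * max 0 (?U - ?L)"
    using cylinder_upper_scale[OF Q_pos, of 1 "real q1 / real Q" "real q2 / real Q" 0 w]
      cylinder_lower_scale[OF Q_pos, of 1 "real q1 / real Q" "real q2 / real Q" 0 w] Q_pos
    by (simp add: max_mult_distrib_left right_diff_distrib)
  finally have "real (word_count Q \<alpha> a1 q1 a2 q2 w) / real Q = max 0 (?U - ?L)"
    using Q_pos by simp
  moreover have "real (word_count Q \<alpha> a1 q1 a2 q2 w) / real Q \<le> 1"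
    using word_count_le Q_pos by simp
  ultimately show ?thesis by (simp add: word_density_def)
qed

end

theorem lemma3:
  shows "\<exists>F :: letter list \<Rightarrow> real \<times> real \<Rightarrow> real.
    (\<forall>w. length w \<ge> 1 \<longrightarrow>
       continuous_on Tri (F w) \<and> F w ` Tri \<subseteq> {0..1} \<and>
       (\<forall>(Q::nat) (\<alpha>::real) a1 q1 a2 q2.
          Q \<ge> 2 \<longrightarrow> \<alpha> \<notin> \<rat> \<longrightarrow> 0 < \<alpha> \<longrightarrow> \<alpha> < 1 \<longrightarrow>
          farey_nbrs (Q - 1) \<alpha> a1 q1 a2 q2 \<longrightarrow>
          real (word_count Q \<alpha> a1 q1 a2 q2 w) / real Q = F w (real q1 / real Q, real q2 / real Q))) \<and>
    (\<forall>x y. (x, y) \<in> Tri \<longrightarrow>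
       F [LA] (x, y) = 1 - x \<and> F [LB] (x, y) = 1 - y \<and> F [LC] (x, y) = x + y - 1)"
proof (intro exI[of _ word_density] conjI allI impI)
  fix w :: "letter list" and Q :: nat and \<alpha> :: real and a1 q1 a2 q2
  assume "length w \<ge> 1" and "Q \<ge> 2" "\<alpha> \<notin> \<rat>" "0 < \<alpha>" "\<alpha> < 1" "farey_nbrs (Q - 1) \<alpha> a1 q1 a2 q2"
  moreover from \<open>length w \<ge> 1\<close> have "w \<noteq> []" by auto
  ultimately show "real (word_count Q \<alpha> a1 q1 a2 q2 w) / real Q = word_density w (real q1 / real Q, real q2 / real Q)"
    using three_gap.word_count_density[of Q \<alpha> a1 q1 a2 q2 w] by (auto simp: three_gap_def)
qed (use continuous_on_word_density word_density_range word_density_letters in auto)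

end
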